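(* Let $F:\widehat{\gamma}_{\mathrm{par}}\to\widehat{\gamma}_{\mathrm{vir}}$ and $H:\widehat{\gamma}_{\mathrm{vir}}\to\widehat{\gamma}_{\mathrm{par}}$ be the saddle morphisms $F=\mathrm{id}_{K_{\mathrm{cmn}}}\otimes(R\otimes_{R_{\mathrm p}}F_{\mathrm p})$, $H=\mathrm{id}_{K_{\mathrm{cmn}}}\otimes(R\otimes_{R_{\mathrm p}}H_{\mathrm p})$, where $F_{\mathrm p}:\widehat{\gamma}_{\mathrm{par,p}}\to\widehat{\gamma}_{\mathrm{vir,p}}$ and $H_{\mathrm p}:\widehat{\gamma}_{\mathrm{vir,p}}\to\widehat{\gamma}_{\mathrm{par,p}}$ are both given on the even part by $\begin{pmatrix}0&1\\ q_2^2-q_1^2C&0\end{pmatrix}$ and on the odd part by $\begin{pmatrix}q_2&-q_1\\ q_1C&-q_2\end{pmatrix}$. Then, as endomorphisms of $\widehat{\gamma}_{\mathrm{par}}$, \[ H\circ F\simeq 2\,\hat y_1\hat y_2-2(2N+1)\sum_{i=0}^{2N}\hat x_1^{\,i}\,\hat x_2^{\,2N-i}, \] where $\hat x_k,\hat y_k$ denote multiplication by $x_k,y_k$ and $\simeq$ denotes homotopy.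
   Context: Fix $N\ge1$, $w(x)=x^{2N+1}$, $W(x,y)=xy^2+x^{2N+1}$, iterated divided differences $w(x_1,\dots,x_n)=\frac{w(x_1,\dots,x_{n-2},x_{n-1})-w(x_1,\dots,x_{n-2},x_n)}{x_{n-1}-x_n}$. $R=\mathbb{Q}[x_1,\dots,x_4,y_1,\dots,y_4]$, $\deg x_i=2$, $\deg y_i=2N$; $W_4=\sum W(x_i,y_i)$. Matrix factorizations of $V$: $\mathbb{Z}/2$-graded free modules with odd $D$, $D^2=V$; two morphisms are homotopic if their difference is $DX+XD$ for an odd $X$. $A(i,j)$ is the Koszul matrix factorization (tensor product over $R$ of $Re_0\oplus Re_1$, $De_0=b e_1$, $De_1=a e_0$ for each row $(a\mid b)$) with rows $(y_j+y_i\mid x_j(y_j-y_i))$, $(x_j+x_i\mid y_i^2+w(-x_i,x_j))$; $\widehat{\gamma}_{\mathrm{par}}=A(1,3)\otimes A(2,4)$, $\widehat{\gamma}_{\mathrm{vir}}=A(1,4)\otimes A(2,3)$. $R_{\mathrm p}=\mathbb{Q}[p_1,p_2,q_1,q_2,r_1,r_2,C]$, $W_{4,\mathrm p}=p_1q_2r_2+q_1p_2r_2+r_1p_2q_2+p_1q_1r_1C$. $\widehat{\gamma}_{\mathrm{par,p}}$: $R_{\mathrm p}^2$ (odd) $\xrightarrow{P}$ $R_{\mathrm p}^2$ (even) $\xrightarrow{Q}$ $R_{\mathrm p}^2$ (odd) with $P=\begin{pmatrix}p_2&p_1\\ q_2r_2+q_1r_1C&-(q_2r_1+q_1r_2)\end{pmatrix}$,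 $Q=\begin{pmatrix}q_1r_2+q_2r_1&p_1\\ q_2r_2+q_1r_1C&-p_2\end{pmatrix}$; $\widehat{\gamma}_{\mathrm{vir,p}}$: same shape with $P=\begin{pmatrix}r_2&r_1\\ p_2q_2+p_1q_1C&-(p_1q_2+p_2q_1)\end{pmatrix}$, $Q=\begin{pmatrix}p_1q_2+p_2q_1&r_1\\ p_2q_2+p_1q_1C&-r_2\end{pmatrix}$. $\phi_{\mathrm p}:R_{\mathrm p}\to R$: $p_1\mapsto x_2+x_4$, $q_1\mapsto x_3+x_4$, $r_1\mapsto x_1+x_4$, $p_2\mapsto y_2+y_4$, $q_2\mapsto y_3+y_4$, $r_2\mapsto y_1+y_4$, $C\mapsto w(x_1,x_2,-x_3,x_4)+w(x_1,-x_1,x_2,x_4)+w(x_1,-x_1,-x_2,x_4)$; $R\otimes_{R_{\mathrm p}}$ denotes base change along $\phi_{\mathrm p}$. $K_{\mathrm{cmn}}$ is the Koszul matrix factorization with rows $(x_1+x_2+x_3+x_4\mid A)$, $(y_1+y_2+y_3+y_4\mid B)$, $A=-(y_3+y_4)(y_1+y_2+y_4)-y_1y_2+w(-x_1,x_3)+(x_2+x_4)w(x_1,x_2,-x_3)-(x_2+x_4)(x_1+x_4)(w(x_1,-x_1,x_2,x_4)+w(x_1,-x_1,-x_2,x_4))$, $B=x_1y_1+x_2y_2+x_3y_3-x_4y_4$; $K_{\mathrm{cmn}}\otimes_R(R\otimes_{R_{\mathrm p}}\widehat{\gamma}_{\mathrm{par,p}})\cong\widehat{\gamma}_{\mathrm{par}}$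 and similarly for vir, and $F,H$ are regarded as morphisms between $\widehat{\gamma}_{\mathrm{par}}$ and $\widehat{\gamma}_{\mathrm{vir}}$ via these isomorphisms. *)

theory Defs
  imports Complex_Main "HOL-Library.Poly_Mapping"
begin

text \<open>The polynomial ring R = Q[x1..x4,y1..y4] as multivariate polynomials:
  monomials are finitely supported exponent vectors.
  Variable number k is x_k for k = 1..4 and variable number 4+k is y_k.\<close>

type_synonym R = "(nat \<Rightarrow>\<^sub>0 nat) \<Rightarrow>\<^sub>0 rat"

definition Var :: "nat \<Rightarrow> R" where
  "Var n = Poly_Mapping.single (Poly_Mapping.single n 1) 1"

definition X :: "nat \<Rightarrow> R" where "X k = Var k"
definition Y :: "nat \<Rightarrow> R" where "Y k = Var (4 + k)"

text \<open>The function ddr takes the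
  argument list in reversed order (last argument first):
  w(x1,...,x_(n-2),a,b) = (w(x1,...,x_(n-2),a) - w(x1,...,x_(n-2),b)) / (a - b),
  rendered as the (unique, when a \<noteq> b) polynomial c with (a - b) * c = numerator.\<close>

fun ddr :: "nat \<Rightarrow> R list \<Rightarrow> R" where
  "ddr N [] = 0"
| "ddr N [a] = a ^ (2 * N + 1)"
| "ddr N (b # a # rest) = (THE c. (a - b) * c = ddr N (a # rest) - ddr N (b # rest))"

definition wdd :: "nat \<Rightarrow> R list \<Rightarrow> R" where
  "wdd N xs = ddr N (rev xs)"

text \<open>Matrices (with respect to finite bases) over R: M i j is the coefficient of the
  basis vector e_i in the image of e_j.\<close>

definition mmul :: "('a \<Rightarrow> 'b::finite \<Rightarrow> R) \<Rightarrow> ('b \<Rightarrow> 'c \<Rightarrow> R) \<Rightarrow> 'a \<Rightarrow> 'c \<Rightarrow> R" where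
  "mmul A B i k = (\<Sum>j\<in>UNIV. A i j * B j k)"

definition scal :: "R \<Rightarrow> 'a \<Rightarrow> 'a \<Rightarrow> R" where
  "scal c i j = (if i = j then c else 0)"

text \<open>Homotopy of endomorphisms f, g of a matrix factorization with basis parity par
  (True = odd) and differential D: f - g = D X + X D for an odd X.\<close>

definition homotopic :: "('a::finite \<Rightarrow> bool) \<Rightarrow> ('a \<Rightarrow> 'a \<Rightarrow> R) \<Rightarrow> ('a \<Rightarrow> 'a \<Rightarrow> R) \<Rightarrow> ('a \<Rightarrow> 'a \<Rightarrow> R) \<Rightarrow> bool" where
  "homotopic par D f g \<longleftrightarrow>
     (\<exists>Xh. (\<forall>i j. par i = par j \<longrightarrow> Xh i j = 0) \<and>
           (\<forall>i j. f i j - g i j = mmul D Xh i j + mmul Xh D i j))"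

text \<open>Koszul factorization of one row (a | b): basis e0 = False (even), e1 = True (odd),
  D e0 = b e1, D e1 = a e0.\<close>

definition koszul1 :: "R \<Rightarrow> R \<Rightarrow> bool \<Rightarrow> bool \<Rightarrow> R" where
  "koszul1 a b i j = (if \<not> i \<and> j then a else if i \<and> \<not> j then b else 0)"

definition tensD :: "('a \<Rightarrow> bool) \<Rightarrow> ('a \<Rightarrow> 'a \<Rightarrow> R) \<Rightarrow> ('b \<Rightarrow> 'b \<Rightarrow> R) \<Rightarrow> ('a \<times> 'b) \<Rightarrow> ('a \<times> 'b) \<Rightarrow> R" where
  "tensD p1 D1 D2 = (\<lambda>(i1, i2) (j1, j2).
      (if i2 = j2 then D1 i1 j1 else 0) +
      (if i1 = j1 then (if p1 j1 then - 1 else 1) * D2 i2 j2 else 0))"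

definition tensPar :: "('a \<Rightarrow> bool) \<Rightarrow> ('b \<Rightarrow> bool) \<Rightarrow> ('a \<times> 'b) \<Rightarrow> bool" where
  "tensPar p1 p2 = (\<lambda>(i1, i2). p1 i1 \<noteq> p2 i2)"

definition idTens :: "('b \<Rightarrow> 'b \<Rightarrow> R) \<Rightarrow> ('a \<times> 'b) \<Rightarrow> ('a \<times> 'b) \<Rightarrow> R" where
  "idTens f = (\<lambda>(i1, i2) (j1, j2). if i1 = j1 then f i2 j2 else 0)"

text \<open>2x2 matrices, index False = 1st, True = 2nd.\<close>
definition mat2 :: "R \<Rightarrow> R \<Rightarrow> R \<Rightarrow> R \<Rightarrow> bool \<Rightarrow> bool \<Rightarrow> R" where
  "mat2 a b c d i j = (if \<not> i then (if \<not> j then a else b) else (if \<not> j then c else d))"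

text \<open>Rank (2|2) factorization R^2 (odd) -P-> R^2 (even) -Q-> R^2 (odd);
  basis (parity, index), parity True = odd.\<close>
definition twoD :: "(bool \<Rightarrow> bool \<Rightarrow> R) \<Rightarrow> (bool \<Rightarrow> bool \<Rightarrow> R) \<Rightarrow> (bool \<times> bool) \<Rightarrow> (bool \<times> bool) \<Rightarrow> R" where
  "twoD P Q = (\<lambda>(si, i) (sj, j).
      if \<not> si \<and> sj then P i j else if si \<and> \<not> sj then Q i j else 0)"

definition evenOdd :: "(bool \<Rightarrow> bool \<Rightarrow> R) \<Rightarrow> (bool \<Rightarrow> bool \<Rightarrow> R) \<Rightarrow> (bool \<times> bool) \<Rightarrow> (bool \<times> bool) \<Rightarrow> R" where
  "evenOdd Ev Od = (\<lambda>(si, i) (sj, j). if si = sj then (if si then Od i j else Ev i j) else 0)"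

text \<open>Images under phi_p of the generators of R_p.\<close>
definition "pp1 = X 2 + X 4"
definition "qq1 = X 3 + X 4"
definition "rr1 = X 1 + X 4"
definition "pp2 = Y 2 + Y 4"
definition "qq2 = Y 3 + Y 4"
definition "rr2 = Y 1 + Y 4"
definition CC :: "nat \<Rightarrow> R" where
  "CC N = wdd N [X 1, X 2, - X 3, X 4] + wdd N [X 1, - X 1, X 2, X 4]
          + wdd N [X 1, - X 1, - X 2, X 4]"

definition gparD :: "nat \<Rightarrow> (bool \<times> bool) \<Rightarrow> (bool \<times> bool) \<Rightarrow> R" where
  "gparD N = twoD
     (mat2 pp2 pp1 (qq2 * rr2 + qq1 * rr1 * CC N) (- (qq2 * rr1 + qq1 * rr2)))
     (mat2 (qq1 * rr2 + qq2 * rr1) pp1 (qq2 * rr2 + qq1 * rr1 * CC N) (- pp2))"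

definition gvirD :: "nat \<Rightarrow> (bool \<times> bool) \<Rightarrow> (bool \<times> bool) \<Rightarrow> R" where
  "gvirD N = twoD
     (mat2 rr2 rr1 (pp2 * qq2 + pp1 * qq1 * CC N) (- (pp1 * qq2 + pp2 * qq1)))
     (mat2 (pp1 * qq2 + pp2 * qq1) rr1 (pp2 * qq2 + pp1 * qq1 * CC N) (- rr2))"

definition gPar :: "(bool \<times> bool) \<Rightarrow> bool" where "gPar = fst"

definition Acmn :: "nat \<Rightarrow> R" where
  "Acmn N = - (Y 3 + Y 4) * (Y 1 + Y 2 + Y 4) - Y 1 * Y 2 + wdd N [- X 1, X 3]
     + (X 2 + X 4) * wdd N [X 1, X 2, - X 3]
     - (X 2 + X 4) * (X 1 + X 4) * (wdd N [X 1, - X 1, X 2, X 4] + wdd N [X 1, - X 1, - X 2, X 4])"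

definition Bcmn :: R where
  "Bcmn = X 1 * Y 1 + X 2 * Y 2 + X 3 * Y 3 - X 4 * Y 4"

definition kPar :: "bool \<times> bool \<Rightarrow> bool" where "kPar = tensPar id id"

definition Kcmn :: "nat \<Rightarrow> (bool \<times> bool) \<Rightarrow> (bool \<times> bool) \<Rightarrow> R" where
  "Kcmn N = tensD id (koszul1 (X 1 + X 2 + X 3 + X 4) (Acmn N)) (koszul1 (Y 1 + Y 2 + Y 3 + Y 4) Bcmn)"

definition parityPV :: "(bool \<times> bool) \<times> (bool \<times> bool) \<Rightarrow> bool" where
  "parityPV = tensPar kPar gPar"

definition Dpar :: "nat \<Rightarrow> ((bool \<times> bool) \<times> (bool \<times> bool)) \<Rightarrow> ((bool \<times> bool) \<times> (bool \<times> bool)) \<Rightarrow> R" where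
  "Dpar N = tensD kPar (Kcmn N) (gparD N)"

definition Dvir :: "nat \<Rightarrow> ((bool \<times> bool) \<times> (bool \<times> bool)) \<Rightarrow> ((bool \<times> bool) \<times> (bool \<times> bool)) \<Rightarrow> R" where
  "Dvir N = tensD kPar (Kcmn N) (gvirD N)"

definition FpH :: "nat \<Rightarrow> (bool \<times> bool) \<Rightarrow> (bool \<times> bool) \<Rightarrow> R" where
  "FpH N = evenOdd (mat2 0 1 (qq2 ^ 2 - qq1 ^ 2 * CC N) 0) (mat2 qq2 (- qq1) (qq1 * CC N) (- qq2))"

definition Fmor :: "nat \<Rightarrow> ((bool \<times> bool) \<times> (bool \<times> bool)) \<Rightarrow> ((bool \<times> bool) \<times> (bool \<times> bool)) \<Rightarrow> R" where
  "Fmor N = idTens (FpH N)"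

definition Hmor :: "nat \<Rightarrow> ((bool \<times> bool) \<times> (bool \<times> bool)) \<Rightarrow> ((bool \<times> bool) \<times> (bool \<times> bool)) \<Rightarrow> R" where
  "Hmor N = idTens (FpH N)"

end

theory Submission
  imports Defs "HOL-Library.Multiset"
begin

(* Since F_p = H_p squares to multiplication by q_2^2 - q_1^2 C, the composite H F is multiplication
   by that scalar, and the claim is that two scalars act homotopically on gamma_par. The scalars
   acting null-homotopically form an ideal containing the entries of every Koszul row of K_cmn and
   of gamma_par,p. Modulo this ideal x_2 = -x_4, x_3 = -x_1, y_2 = -y_4, y_3 = -y_1, and the divided
   differences of x^(2N+1) become complete homogeneous symmetric polynomials in x_1, x_4. A
   polynomial identity among these, proved by induction on N, then writes the difference of the two
   scalars as 2 A plus the entry q_2 r_2 + q_1 r_1 C of gamma_par,p. *)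

section \<open>Complete homogeneous symmetric polynomials\<close>

fun hsym :: "nat \<Rightarrow> 'a::comm_ring_1 list \<Rightarrow> 'a" where
  "hsym 0 xs = 1"
| "hsym (Suc d) [] = 0"
| "hsym (Suc d) (a # xs) = a * hsym d (a # xs) + hsym (Suc d) xs"

declare hsym.simps(3) [simp del]

lemma hsym_divided_difference:
  "(a - b) * hsym d (a # b # xs) = hsym (Suc d) (a # xs) - hsym (Suc d) (b # xs)"
proof (induction d)
  case 0
  then show ?case by (simp add: hsym.simps(3))
next
  case (Suc d)
  have "(a - b) * hsym (Suc d) (a # b # xs)
      = a * ((a - b) * hsym d (a # b # xs)) + (a - b) * hsym (Suc d) (b # xs)"
    by (simp add: hsym.simps(3) algebra_simps)
  also have "\<dots> = hsym (Suc (Suc d)) (a # xs) - hsym (Suc (Suc d)) (b # xs)"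
    unfolding Suc by (simp add: hsym.simps(3) algebra_simps)
  finally show ?case .
qed

lemma hsym_singleton: "hsym d [a] = a ^ d"
  by (induction d) (auto simp: hsym.simps(3))

lemma hsym_double: "hsym d [a, a] = of_nat (d + 1) * a ^ d"
  by (induction d) (auto simp: hsym.simps(3) hsym_singleton algebra_simps)

lemma hsym_swap: "hsym d (a # b # xs) = hsym d (b # a # xs)"
proof (induction d)
  case 0
  then show ?case by simp
next
  case (Suc d)
  have "(a - b) * hsym d (a # b # xs) = a * hsym d (a # xs) - b * hsym d (b # xs)"
    using hsym_divided_difference[of a b d xs] by (simp add: hsym.simps(3))
  then show ?case
    using Suc by (simp add: hsym.simps(3) algebra_simps)
qed

lemma hsym_cong_tail:
  "(\<And>e. hsym e xs = hsym e ys) \<Longrightarrow> hsym d (a # xs) = hsym d (a # ys)"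
  by (induction d) (auto simp: hsym.simps(3))

lemma hsym_move_to_front: "hsym d (xs @ a # ys) = hsym d (a # xs @ ys)"
proof (induction xs arbitrary: d)
  case Nil
  then show ?case by simp
next
  case (Cons b xs)
  have "hsym d (b # xs @ a # ys) = hsym d (b # a # xs @ ys)"
    using Cons by (intro hsym_cong_tail)
  then show ?case
    by (simp add: hsym_swap)
qed

lemma hsym_perm: "mset xs = mset ys \<Longrightarrow> hsym d xs = hsym d ys"
proof (induction xs arbitrary: ys d)
  case Nil
  then show ?case by simp
next
  case (Cons a xs)
  then have "a \<in> set ys"
    by (metis list.set_intros(1) set_mset_mset)
  then obtain ys1 ys2 where ys: "ys = ys1 @ a # ys2"
    by (meson split_list)
  with Cons.prems have "mset xs = mset (ys1 @ ys2)"
    by simp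
  then have "hsym d (a # xs) = hsym d (a # ys1 @ ys2)"
    using Cons.IH by (intro hsym_cong_tail)
  then show ?case
    by (simp add: ys hsym_move_to_front)
qed

lemma hsym_opposite_pair_step:
  "hsym (Suc (Suc d)) (a # - a # xs) = a\<^sup>2 * hsym d (a # - a # xs) + hsym (Suc (Suc d)) xs"
  by (simp add: hsym.simps(3) algebra_simps power2_eq_square)

lemma hsym_opposite_pair: "hsym (2 * k) [a, - a] = a ^ (2 * k)"
proof (induction k)
  case 0
  then show ?case by simp
next
  case (Suc k)
  have "hsym (2 * Suc k) [a, - a] = a\<^sup>2 * hsym (2 * k) [a, - a]"
    using hsym_opposite_pair_step[of "2 * k" a "[]"] by simp
  then show ?case
    using Suc by (simp add: power2_eq_square)
qed

lemma ddr_eq_hsym: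
  assumes "distinct xs" "xs \<noteq> []" "length xs \<le> 2 * N + 2"
  shows "ddr N xs = hsym (2 * N + 2 - length xs) xs"
  using assms
proof (induction N xs rule: ddr.induct)
  case (1 N)
  then show ?case by simp
next
  case (2 N a)
  then show ?case by (simp add: hsym_singleton)
next
  case (3 N b a xs)
  define k where "k = 2 * N - length xs"
  have IH: "ddr N (a # xs) = hsym (Suc k) (a # xs)" "ddr N (b # xs) = hsym (Suc k) (b # xs)"
    using 3 by (auto simp: k_def Suc_diff_le)
  have quotient: "(a - b) * hsym k (b # a # xs) = ddr N (a # xs) - ddr N (b # xs)"
    using hsym_divided_difference[of b a k xs] hsym_swap[of k b a xs] unfolding IH
    by (simp add: algebra_simps)
  have "a \<noteq> b"
    using "3.prems"(1) by auto
  then have "ddr N (b # a # xs) = hsym k (b # a # xs)"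
    using quotient by (auto intro!: the_equality simp flip: quotient)
  then show ?case
    by (simp add: k_def)
qed

lemma wdd_eq_hsym:
  assumes "distinct xs" "xs \<noteq> []" "length xs \<le> 2 * N + 2"
  shows "wdd N xs = hsym (2 * N + 2 - length xs) xs"
  using assms ddr_eq_hsym[of "rev xs" N] hsym_perm[of "rev xs" xs] by (simp add: wdd_def)

lemma lookup_Var: "Poly_Mapping.lookup (Var n) (Poly_Mapping.single m 1) = (if n = m then 1 else 0)"
proof -
  have "Poly_Mapping.single n (1::nat) = Poly_Mapping.single m 1 \<longleftrightarrow> n = m"
    by (metis lookup_single_eq lookup_single_not_eq zero_neq_one)
  then show ?thesis
    unfolding Var_def by (auto simp: lookup_single_not_eq simp del: One_nat_def)
qed

lemma Var_eq_iff: "Var n = Var m \<longleftrightarrow> n = m"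
  by (metis lookup_Var zero_neq_one)

lemma Var_neq_uminus_Var: "Var n \<noteq> - Var m"
proof
  assume eq: "Var n = - Var m"
  have "1 = Poly_Mapping.lookup (Var n) (Poly_Mapping.single n 1)"
    using lookup_Var[of n n] by simp
  also have "\<dots> = - Poly_Mapping.lookup (Var m) (Poly_Mapping.single n 1)"
    unfolding eq by (rule lookup_uminus)
  finally show False
    using lookup_Var[of m n] by (simp split: if_splits)
qed

lemma Var_nonzero: "Var n \<noteq> 0"
  using Var_neq_uminus_Var[of n n] by auto

lemmas X_distinct = X_def Var_eq_iff Var_neq_uminus_Var Var_neq_uminus_Var[symmetric] Var_nonzero

lemma CC_eq_hsym:
  "CC (Suc n) = hsym (2 * n) [X 1, X 2, - X 3, X 4] + hsym (2 * n) [X 1, - X 1, X 2, X 4]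
     + hsym (2 * n) [X 1, - X 1, - X 2, X 4]"
  unfolding CC_def by (simp add: wdd_eq_hsym X_distinct)

lemma wdd_two_eq_hsym: "wdd N [- X 1, X 3] = hsym (2 * N) [- X 1, X 3]"
  by (simp add: wdd_eq_hsym X_distinct)

lemma hsym_opposite_pairs_step:
  "hsym (2 * Suc n) [v, - v, u, - u] = v\<^sup>2 * hsym (2 * n) [v, - v, u, - u] + u ^ (2 * n + 2)"
  using hsym_opposite_pair_step[of "2 * n" v "[u, - u]"] hsym_opposite_pair[of "Suc n" u] by simp

lemma hsym_opposite_double_step:
  "hsym (2 * Suc n) [v, - v, u, u]
     = v\<^sup>2 * hsym (2 * n) [v, - v, u, u] + of_nat (2 * n + 3) * u ^ (2 * n + 2)"
  using hsym_opposite_pair_step[of "2 * n" v "[u, u]"] hsym_double[of "2 * n + 2" u]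
  by (simp add: algebra_simps)

lemma hsym_opposite_pairs:
  "(v\<^sup>2 - u\<^sup>2) * hsym (2 * n) [v, - v, u, - u] = v ^ (2 * n + 2) - u ^ (2 * n + 2)"
proof (induction n)
  case 0
  then show ?case by (simp add: power2_eq_square)
next
  case (Suc n)
  have "(v\<^sup>2 - u\<^sup>2) * hsym (2 * Suc n) [v, - v, u, - u]
      = v\<^sup>2 * ((v\<^sup>2 - u\<^sup>2) * hsym (2 * n) [v, - v, u, - u]) + (v\<^sup>2 - u\<^sup>2) * u ^ (2 * n + 2)"
    unfolding hsym_opposite_pairs_step by (simp add: algebra_simps)
  then show ?case
    unfolding Suc by (simp add: algebra_simps power2_eq_square)
qed

lemma hsym_opposite_double:
  "(v\<^sup>2 - u\<^sup>2) * hsym (2 * n) [v, - v, u, u]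
     = 2 * v\<^sup>2 * hsym (2 * n) [v, - v, u, - u] - v ^ (2 * n + 2)
       - of_nat (2 * n + 1) * u ^ (2 * n + 2)"
proof (induction n)
  case 0
  then show ?case by (simp add: algebra_simps power2_eq_square)
next
  case (Suc n)
  have "(v\<^sup>2 - u\<^sup>2) * hsym (2 * Suc n) [v, - v, u, u]
      = v\<^sup>2 * ((v\<^sup>2 - u\<^sup>2) * hsym (2 * n) [v, - v, u, u])
        + of_nat (2 * n + 3) * (v\<^sup>2 - u\<^sup>2) * u ^ (2 * n + 2)"
    unfolding hsym_opposite_double_step by (simp add: algebra_simps)
  then show ?case
    unfolding Suc hsym_opposite_pairs_step by (simp add: algebra_simps power2_eq_square)
qed

text \<open>The image of the constant \<open>C\<close> once \<open>x\<^sub>2, x\<^sub>3\<close> are replaced by \<open>-x\<^sub>4, -x\<^sub>1\<close>,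
  with \<open>u = x\<^sub>1\<close>, \<open>v = x\<^sub>4\<close> and \<open>N = n + 1\<close>.\<close>

definition reduced_C :: "nat \<Rightarrow> 'a::comm_ring_1 \<Rightarrow> 'a \<Rightarrow> 'a" where
  "reduced_C n u v =
     hsym (2 * n) [v, - v, u, u] + hsym (2 * n) [v, - v, u, - u] + hsym (2 * n) [u, - u, v, v]"

lemma diff_squares_mult_reduced_C:
  "(v\<^sup>2 - u\<^sup>2) * reduced_C n u v = of_nat (2 * n + 3) * (v ^ (2 * n + 2) - u ^ (2 * n + 2))"
proof -
  define T where "T = hsym (2 * n) [v, - v, u, - u]"
  have "hsym (2 * n) [u, - u, v, - v] = T"
    unfolding T_def by (rule hsym_perm) simp
  then have swapped: "(u\<^sup>2 - v\<^sup>2) * hsym (2 * n) [u, - u, v, v]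
      = 2 * u\<^sup>2 * T - u ^ (2 * n + 2) - of_nat (2 * n + 1) * v ^ (2 * n + 2)"
    using hsym_opposite_double[of u v n] by (simp only:)
  have direct: "(v\<^sup>2 - u\<^sup>2) * hsym (2 * n) [v, - v, u, u]
      = 2 * v\<^sup>2 * T - v ^ (2 * n + 2) - of_nat (2 * n + 1) * u ^ (2 * n + 2)"
    unfolding T_def by (rule hsym_opposite_double)
  have pairs: "(v\<^sup>2 - u\<^sup>2) * T = v ^ (2 * n + 2) - u ^ (2 * n + 2)"
    unfolding T_def by (rule hsym_opposite_pairs)
  have "(v\<^sup>2 - u\<^sup>2) * reduced_C n u v = (v\<^sup>2 - u\<^sup>2) * hsym (2 * n) [v, - v, u, u]
      + (v\<^sup>2 - u\<^sup>2) * T - (u\<^sup>2 - v\<^sup>2) * hsym (2 * n) [u, - u, v, v]"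
    unfolding reduced_C_def T_def by (simp add: algebra_simps)
  also have "\<dots> = 3 * ((v\<^sup>2 - u\<^sup>2) * T) + of_nat (2 * n) * (v ^ (2 * n + 2) - u ^ (2 * n + 2))"
    unfolding swapped direct by (simp add: algebra_simps)
  also have "\<dots> = of_nat (2 * n + 3) * (v ^ (2 * n + 2) - u ^ (2 * n + 2))"
    unfolding pairs by (simp add: algebra_simps)
  finally show ?thesis .
qed

lemma reduced_C_geometric_sum:
  fixes u v :: "'a::idom"
  assumes "u + v \<noteq> 0"
  shows "v * (v - u) * reduced_C n u v
    = of_nat (2 * Suc n + 1) *
        ((\<Sum>i = 0..2 * Suc n. u ^ i * (- v) ^ (2 * Suc n - i)) - u ^ (2 * Suc n))"
proof -
  define m where "m = 2 * Suc n"
  define S where "S = (\<Sum>i = 0..m. u ^ i * (- v) ^ (m - i))"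
  have "u ^ Suc m - (- v) ^ Suc m = (u - - v) * S"
    using diff_power_eq_sum[of u m "- v"] by (simp add: S_def lessThan_Suc_atMost atLeast0AtMost)
  moreover have "(- v) ^ m = v ^ m"
    by (simp add: m_def)
  ultimately have geometric: "(u + v) * S = u ^ Suc m + v ^ Suc m"
    by simp
  have "(u + v) * (v * (v - u) * reduced_C n u v) = v * ((v\<^sup>2 - u\<^sup>2) * reduced_C n u v)"
    by (simp add: algebra_simps power2_eq_square)
  also have "\<dots> = of_nat (m + 1) * (v ^ Suc m - v * u ^ m)"
    unfolding diff_squares_mult_reduced_C by (simp add: m_def algebra_simps)
  also have "\<dots> = of_nat (m + 1) * ((u + v) * S - (u + v) * u ^ m)"
    unfolding geometric by (simp add: algebra_simps)
  also have "\<dots> = (u + v) * (of_nat (m + 1) * (S - u ^ m))"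
    by (simp add: algebra_simps)
  finally show ?thesis
    using assms by (simp add: S_def m_def)
qed

section \<open>Homotopies between scalar multiplications\<close>

definition odd_map :: "('a \<Rightarrow> bool) \<Rightarrow> ('a \<Rightarrow> 'a \<Rightarrow> R) \<Rightarrow> bool" where
  "odd_map p M \<longleftrightarrow> (\<forall>i j. p i = p j \<longrightarrow> M i j = 0)"

definition mult_homotopic :: "('a::finite \<Rightarrow> bool) \<Rightarrow> ('a \<Rightarrow> 'a \<Rightarrow> R) \<Rightarrow> R \<Rightarrow> R \<Rightarrow> bool" where
  "mult_homotopic p D a b \<longleftrightarrow> homotopic p D (scal a) (scal b)"

lemma mult_homotopic_iff:
  "mult_homotopic p D a b \<longleftrightarrow>
     (\<exists>h. odd_map p h \<and> (\<forall>i j. scal (a - b) i j = mmul D h i j + mmul h D i j))"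
  by (simp add: mult_homotopic_def homotopic_def odd_map_def scal_def)

lemma mmul_add_left: "mmul (\<lambda>i j. A i j + B i j) C i k = mmul A C i k + mmul B C i k"
  by (simp add: mmul_def distrib_right sum.distrib)

lemma mmul_add_right: "mmul A (\<lambda>i j. B i j + C i j) i k = mmul A B i k + mmul A C i k"
  by (simp add: mmul_def distrib_left sum.distrib)

lemma mmul_scale_left: "mmul (\<lambda>i j. c * A i j) B i k = c * mmul A B i k"
  by (simp add: mmul_def sum_distrib_left mult.assoc)

lemma mmul_scale_right: "mmul A (\<lambda>i j. c * B i j) i k = c * mmul A B i k"
  by (simp add: mmul_def sum_distrib_left algebra_simps)

lemma mult_homotopic_refl: "mult_homotopic p D a a"
  unfolding mult_homotopic_iff odd_map_def
  by (intro exI[of _ "\<lambda>i j. 0"]) (simp add: mmul_def scal_def)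

lemma mult_homotopic_add:
  assumes "mult_homotopic p D a a'" "mult_homotopic p D b b'"
  shows "mult_homotopic p D (a + b) (a' + b')"
proof -
  obtain h where h: "odd_map p h" "\<And>i j. scal (a - a') i j = mmul D h i j + mmul h D i j"
    using assms(1) unfolding mult_homotopic_iff by blast
  obtain k where k: "odd_map p k" "\<And>i j. scal (b - b') i j = mmul D k i j + mmul k D i j"
    using assms(2) unfolding mult_homotopic_iff by blast
  have split: "scal (a + b - (a' + b')) i j = scal (a - a') i j + scal (b - b') i j" for i j
    by (simp add: scal_def)
  have "scal (a + b - (a' + b')) i j
      = mmul D (\<lambda>i j. h i j + k i j) i j + mmul (\<lambda>i j. h i j + k i j) D i j" for i j
    unfolding split h(2) k(2) mmul_add_left mmul_add_right by simp
  moreover have "odd_map p (\<lambda>i j. h i j + k i j)"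
    using h(1) k(1) by (simp add: odd_map_def)
  ultimately show ?thesis
    unfolding mult_homotopic_iff by blast
qed

lemma mult_homotopic_mult_left:
  assumes "mult_homotopic p D a b"
  shows "mult_homotopic p D (c * a) (c * b)"
proof -
  obtain h where h: "odd_map p h" "\<And>i j. scal (a - b) i j = mmul D h i j + mmul h D i j"
    using assms unfolding mult_homotopic_iff by blast
  have scale: "scal (c * a - c * b) i j = c * scal (a - b) i j" for i j
    by (simp add: scal_def algebra_simps)
  have "scal (c * a - c * b) i j = mmul D (\<lambda>i j. c * h i j) i j + mmul (\<lambda>i j. c * h i j) D i j"
    for i j
    unfolding scale h(2) mmul_scale_left mmul_scale_right by (rule distrib_left)
  moreover have "odd_map p (\<lambda>i j. c * h i j)"
    using h(1) by (simp add: odd_map_def)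
  ultimately show ?thesis
    unfolding mult_homotopic_iff by blast
qed

lemma mult_homotopic_uminus: "mult_homotopic p D a b \<Longrightarrow> mult_homotopic p D (- a) (- b)"
  using mult_homotopic_mult_left[of p D a b "- 1"] by simp

lemma mult_homotopic_sym: "mult_homotopic p D a b \<Longrightarrow> mult_homotopic p D b a"
  using mult_homotopic_add[OF mult_homotopic_uminus mult_homotopic_refl, of p D a b "a + b"] by simp

lemma mult_homotopic_trans:
  "mult_homotopic p D a b \<Longrightarrow> mult_homotopic p D b c \<Longrightarrow> mult_homotopic p D a c"
  using mult_homotopic_add[OF mult_homotopic_add mult_homotopic_refl, of p D a b b c "- b"] by simp

lemma mult_homotopic_diff:
  "mult_homotopic p D a a' \<Longrightarrow> mult_homotopic p D b b' \<Longrightarrow> mult_homotopic p D (a - b) (a' - b')"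
  using mult_homotopic_add[OF _ mult_homotopic_uminus, of p D a a' b b'] by simp

lemma mult_homotopic_mult:
  assumes "mult_homotopic p D a a'" "mult_homotopic p D b b'"
  shows "mult_homotopic p D (a * b) (a' * b')"
proof -
  have "mult_homotopic p D (a * b) (a * b')"
    using assms(2) by (rule mult_homotopic_mult_left)
  moreover have "mult_homotopic p D (b' * a) (b' * a')"
    using assms(1) by (rule mult_homotopic_mult_left)
  ultimately show ?thesis
    by (simp add: mult_homotopic_trans mult.commute)
qed

lemma mult_homotopic_power: "mult_homotopic p D a b \<Longrightarrow> mult_homotopic p D (a ^ n) (b ^ n)"
  by (induction n) (auto intro: mult_homotopic_mult mult_homotopic_refl)

lemma mult_homotopic_sum:
  "(\<And>i. i \<in> A \<Longrightarrow> mult_homotopic p D (f i) (g i)) \<Longrightarrow> mult_homotopic p D (sum f A) (sum g A)"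
  by (induction A rule: infinite_finite_induct) (auto intro: mult_homotopic_add mult_homotopic_refl)

lemma mult_homotopic_hsym:
  "list_all2 (mult_homotopic p D) xs ys \<Longrightarrow> mult_homotopic p D (hsym d xs) (hsym d ys)"
proof (induction d xs arbitrary: ys rule: hsym.induct)
  case (3 d a xs)
  then obtain b ys' where
    "ys = b # ys'" "mult_homotopic p D a b" "list_all2 (mult_homotopic p D) xs ys'"
    by (cases ys) auto
  with 3 show ?case
    by (simp add: hsym.simps(3) mult_homotopic_add mult_homotopic_mult)
qed (auto intro: mult_homotopic_refl)

definition parity_sign :: "('a \<Rightarrow> bool) \<Rightarrow> 'a \<Rightarrow> R" where
  "parity_sign p a = (if p a then - 1 else 1)"

lemma tensD_apply:
  "tensD p1 D1 D2 (i1, i2) (j1, j2) =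
     (if i2 = j2 then D1 i1 j1 else 0) + (if i1 = j1 then parity_sign p1 j1 * D2 i2 j2 else 0)"
  by (simp add: tensD_def parity_sign_def)

lemma sum_UNIV_prod:
  "(\<Sum>j\<in>(UNIV::('a::finite \<times> 'b::finite) set). f j) = (\<Sum>a\<in>UNIV. \<Sum>b\<in>UNIV. f (a, b))"
  by (simp add: sum.cartesian_product)

lemma sum_if_const_cond: "(\<Sum>x\<in>A. if P then f x else 0) = (if P then sum f A else 0)"
  by simp

lemmas mmul_prod_simps = mmul_def sum_UNIV_prod sum.distrib sum.delta sum.delta' sum_if_const_cond
  if_distrib[of "\<lambda>x. x * y" for y] if_distrib[of "\<lambda>x. y * x" for y]

lemma odd_map_tensD:
  "odd_map p1 D1 \<Longrightarrow> odd_map p2 D2 \<Longrightarrow> odd_map (tensPar p1 p2) (tensD p1 D1 D2)"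
  by (auto simp: odd_map_def tensPar_def tensD_apply)

text \<open>The homotopy \<open>h \<otimes> id\<close> works: the cross terms \<open>\<plusminus>D\<^sub>2 h\<close> cancel by the Koszul sign
  because \<open>h\<close> is odd.\<close>

lemma mult_homotopic_tensD_left:
  assumes "mult_homotopic p1 D1 a b"
  shows "mult_homotopic (tensPar p1 p2) (tensD p1 D1 D2) a b"
proof -
  obtain h where h: "odd_map p1 h" "\<And>i j. scal (a - b) i j = mmul D1 h i j + mmul h D1 i j"
    using assms unfolding mult_homotopic_iff by blast
  define L :: "'a \<times> 'b \<Rightarrow> 'a \<times> 'b \<Rightarrow> R" where
    "L = (\<lambda>(i1, i2) (j1, j2). if i2 = j2 then h i1 j1 else 0)"
  have "odd_map (tensPar p1 p2) L"
    using h(1) by (auto simp: odd_map_def L_def tensPar_def)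
  moreover have "scal (a - b) i j = mmul (tensD p1 D1 D2) L i j + mmul L (tensD p1 D1 D2) i j"
    for i j
  proof -
    obtain i1 i2 k1 k2 where ij: "i = (i1, i2)" "j = (k1, k2)"
      by fastforce
    have DL: "mmul (tensD p1 D1 D2) L (i1, i2) (k1, k2) =
        (if i2 = k2 then mmul D1 h i1 k1 else 0) + parity_sign p1 i1 * D2 i2 k2 * h i1 k1"
      by (simp add: mmul_prod_simps tensD_apply L_def distrib_right cong: if_cong)
    have LD: "mmul L (tensD p1 D1 D2) (i1, i2) (k1, k2) =
        (if i2 = k2 then mmul h D1 i1 k1 else 0) + parity_sign p1 k1 * D2 i2 k2 * h i1 k1"
      by (simp add: mmul_prod_simps tensD_apply L_def distrib_left cong: if_cong)
    have cancel:
      "parity_sign p1 i1 * D2 i2 k2 * h i1 k1 + parity_sign p1 k1 * D2 i2 k2 * h i1 k1 = 0"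
      using h(1) by (cases "p1 i1 = p1 k1") (auto simp: odd_map_def parity_sign_def)
    have "scal (a - b) (i1, i2) (k1, k2) = (if i2 = k2 then scal (a - b) i1 k1 else 0)"
      by (simp add: scal_def)
    then show ?thesis
      unfolding ij DL LD h(2) using cancel by (simp add: algebra_simps)
  qed
  ultimately show ?thesis
    unfolding mult_homotopic_iff by blast
qed

text \<open>Here the homotopy is \<open>\<epsilon> \<otimes> h\<close> with the parity sign \<open>\<epsilon>\<close>; the cross terms cancel
  because \<open>D\<^sub>1\<close> is odd.\<close>

lemma mult_homotopic_tensD_right:
  assumes "odd_map p1 D1" "mult_homotopic p2 D2 a b"
  shows "mult_homotopic (tensPar p1 p2) (tensD p1 D1 D2) a b"
proof -
  obtain h where h: "odd_map p2 h" "\<And>i j. scal (a - b) i j = mmul D2 h i j + mmul h D2 i j"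
    using assms(2) unfolding mult_homotopic_iff by blast
  define L :: "'a \<times> 'b \<Rightarrow> 'a \<times> 'b \<Rightarrow> R" where
    "L = (\<lambda>(i1, i2) (j1, j2). if i1 = j1 then parity_sign p1 i1 * h i2 j2 else 0)"
  have "odd_map (tensPar p1 p2) L"
    using h(1) by (auto simp: odd_map_def L_def tensPar_def)
  moreover have "scal (a - b) i j = mmul (tensD p1 D1 D2) L i j + mmul L (tensD p1 D1 D2) i j"
    for i j
  proof -
    obtain i1 i2 k1 k2 where ij: "i = (i1, i2)" "j = (k1, k2)"
      by fastforce
    have sign_square: "parity_sign p1 k1 * (parity_sign p1 k1 * x) = x" for x
      by (simp add: parity_sign_def)
    have DL: "mmul (tensD p1 D1 D2) L (i1, i2) (k1, k2) =
        D1 i1 k1 * (parity_sign p1 k1 * h i2 k2) + (if i1 = k1 then mmul D2 h i2 k2 else 0)"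
      by (simp add: mmul_prod_simps tensD_apply L_def distrib_right sum_distrib_left
          sign_square algebra_simps cong: if_cong)
    have LD: "mmul L (tensD p1 D1 D2) (i1, i2) (k1, k2) =
        parity_sign p1 i1 * h i2 k2 * D1 i1 k1 + (if i1 = k1 then mmul h D2 i2 k2 else 0)"
      by (simp add: mmul_prod_simps tensD_apply L_def distrib_left sum_distrib_left
          sign_square algebra_simps cong: if_cong)
    have cancel:
      "D1 i1 k1 * (parity_sign p1 k1 * h i2 k2) + parity_sign p1 i1 * h i2 k2 * D1 i1 k1 = 0"
      using assms(1) by (cases "p1 i1 = p1 k1") (auto simp: odd_map_def parity_sign_def)
    have "scal (a - b) (i1, i2) (k1, k2) = (if i1 = k1 then scal (a - b) i2 k2 else 0)"
      by (simp add: scal_def)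
    then show ?thesis
      unfolding ij DL LD h(2) using cancel by (simp add: algebra_simps)
  qed
  ultimately show ?thesis
    unfolding mult_homotopic_iff by blast
qed

lemma odd_map_koszul1: "odd_map id (koszul1 a b)"
  by (simp add: odd_map_def koszul1_def)

lemma mult_homotopic_koszul1:
  "mult_homotopic id (koszul1 a b) a 0" "mult_homotopic id (koszul1 a b) b 0"
  unfolding mult_homotopic_iff odd_map_def
  subgoal by (intro exI[of _ "\<lambda>i j. if i \<and> \<not> j then 1 else 0"])
      (auto simp: mmul_def UNIV_bool koszul1_def scal_def)
  subgoal by (intro exI[of _ "\<lambda>i j. if \<not> i \<and> j then 1 else 0"])
      (auto simp: mmul_def UNIV_bool koszul1_def scal_def)
  done

text \<open>The Koszul factorization with rows \<open>(a\<^sub>1 | b\<^sub>1)\<close>, \<open>(a\<^sub>2 | b\<^sub>2)\<close>, written in the rank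
  \<open>(2|2)\<close> form of \<^const>\<open>twoD\<close>.\<close>

definition koszul2 :: "R \<Rightarrow> R \<Rightarrow> R \<Rightarrow> R \<Rightarrow> bool \<times> bool \<Rightarrow> bool \<times> bool \<Rightarrow> R" where
  "koszul2 a1 b1 a2 b2 = twoD (mat2 a1 a2 b2 (- b1)) (mat2 b1 a2 b2 (- a1))"

lemma mult_homotopic_koszul2:
  "mult_homotopic fst (koszul2 a1 b1 a2 b2) a1 0"
  "mult_homotopic fst (koszul2 a1 b1 a2 b2) a2 0"
  "mult_homotopic fst (koszul2 a1 b1 a2 b2) b2 0"
  unfolding mult_homotopic_iff odd_map_def
  subgoal by (intro exI[of _ "twoD (mat2 0 0 0 (- 1)) (mat2 1 0 0 0)"] conjI)
      (simp_all add: mmul_def sum_UNIV_prod UNIV_bool koszul2_def twoD_def mat2_def scal_def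
        split_paired_All all_bool_eq)
  subgoal by (intro exI[of _ "twoD (mat2 0 0 1 0) (mat2 0 0 1 0)"] conjI)
      (simp_all add: mmul_def sum_UNIV_prod UNIV_bool koszul2_def twoD_def mat2_def scal_def
        split_paired_All all_bool_eq)
  subgoal by (intro exI[of _ "twoD (mat2 0 1 0 0) (mat2 0 1 0 0)"] conjI)
      (simp_all add: mmul_def sum_UNIV_prod UNIV_bool koszul2_def twoD_def mat2_def scal_def
        split_paired_All all_bool_eq)
  done

lemma idTens_mmul: "mmul (idTens f) (idTens g) = idTens (mmul f g)"
proof (intro ext)
  fix i j :: "'a \<times> 'b"
  show "mmul (idTens f) (idTens g) i j = idTens (mmul f g) i j"
    by (cases i; cases j) (simp add: mmul_prod_simps idTens_def cong: if_cong)
qed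

lemma idTens_scal: "idTens (scal c) = scal c"
  by (intro ext) (auto simp: idTens_def scal_def split: if_splits)

section \<open>Reduction modulo null-homotopic scalars on gamma_par\<close>

lemma FpH_squared: "mmul (FpH N) (FpH N) = scal (qq2\<^sup>2 - qq1\<^sup>2 * CC N)"
proof (intro ext)
  fix i j :: "bool \<times> bool"
  show "mmul (FpH N) (FpH N) i j = scal (qq2\<^sup>2 - qq1\<^sup>2 * CC N) i j"
    by (cases i; cases j) (auto simp: mmul_def sum_UNIV_prod UNIV_bool FpH_def evenOdd_def mat2_def
        scal_def power2_eq_square algebra_simps)
qed

lemma odd_map_Kcmn: "odd_map kPar (Kcmn N)"
  unfolding kPar_def Kcmn_def by (intro odd_map_tensD odd_map_koszul1)

lemma gparD_eq_koszul2:
  "gparD N = koszul2 pp2 (qq1 * rr2 + qq2 * rr1) pp1 (qq2 * rr2 + qq1 * rr1 * CC N)"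
  unfolding gparD_def koszul2_def by (simp add: ac_simps)

abbreviation par_homotopic :: "nat \<Rightarrow> R \<Rightarrow> R \<Rightarrow> bool" where
  "par_homotopic N \<equiv> mult_homotopic parityPV (Dpar N)"

lemma par_homotopic_Kcmn_entries:
  "par_homotopic N (X 1 + X 2 + X 3 + X 4) 0"
  "par_homotopic N (Acmn N) 0"
  "par_homotopic N (Y 1 + Y 2 + Y 3 + Y 4) 0"
  unfolding parityPV_def Dpar_def kPar_def Kcmn_def
  by (intro mult_homotopic_tensD_left mult_homotopic_tensD_right odd_map_koszul1
      mult_homotopic_koszul1)+

lemma par_homotopic_gamma_entries:
  "par_homotopic N pp2 0" "par_homotopic N pp1 0" "par_homotopic N (qq2 * rr2 + qq1 * rr1 * CC N) 0"
  unfolding parityPV_def Dpar_def gPar_def gparD_eq_koszul2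
  by (intro mult_homotopic_tensD_right odd_map_Kcmn mult_homotopic_koszul2)+

lemma par_homotopic_eliminate:
  "par_homotopic N (X 2) (- X 4)" "par_homotopic N (Y 2) (- Y 4)"
  "par_homotopic N (X 3) (- X 1)" "par_homotopic N (Y 3) (- Y 1)"
proof -
  have "par_homotopic N (pp1 - X 4) (0 - X 4)" "par_homotopic N (pp2 - Y 4) (0 - Y 4)"
    by (intro mult_homotopic_diff par_homotopic_gamma_entries mult_homotopic_refl)+
  then show "par_homotopic N (X 2) (- X 4)" "par_homotopic N (Y 2) (- Y 4)"
    by (simp_all add: pp1_def pp2_def)
  have "par_homotopic N (X 1 + X 2 + X 3 + X 4 - pp1 - X 1) (0 - 0 - X 1)"
    "par_homotopic N (Y 1 + Y 2 + Y 3 + Y 4 - pp2 - Y 1) (0 - 0 - Y 1)"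
    by (intro mult_homotopic_diff par_homotopic_Kcmn_entries par_homotopic_gamma_entries
        mult_homotopic_refl)+
  moreover have "X 1 + X 2 + X 3 + X 4 - pp1 - X 1 = X 3" "Y 1 + Y 2 + Y 3 + Y 4 - pp2 - Y 1 = Y 3"
    by (simp_all add: pp1_def pp2_def algebra_simps)
  ultimately show "par_homotopic N (X 3) (- X 1)" "par_homotopic N (Y 3) (- Y 1)"
    by (simp_all only: diff_zero diff_0)
qed

lemma par_homotopic_eliminate_uminus:
  "par_homotopic N (- X 2) (X 4)" "par_homotopic N (- X 3) (X 1)"
  by (metis minus_minus mult_homotopic_uminus par_homotopic_eliminate)+

lemma par_homotopic_CC: "par_homotopic (Suc n) (CC (Suc n)) (reduced_C n (X 1) (X 4))"
proof -
  have "par_homotopic (Suc n) (CC (Suc n)) (hsym (2 * n) [X 1, - X 4, X 1, X 4]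
      + hsym (2 * n) [X 1, - X 1, - X 4, X 4] + hsym (2 * n) [X 1, - X 1, X 4, X 4])"
    unfolding CC_eq_hsym
    by (intro mult_homotopic_add mult_homotopic_hsym list.rel_intros mult_homotopic_refl
        par_homotopic_eliminate par_homotopic_eliminate_uminus)
  moreover have "hsym (2 * n) [X 1, - X 4, X 1, X 4] = hsym (2 * n) [X 4, - X 4, X 1, X 1]"
    "hsym (2 * n) [X 1, - X 1, - X 4, X 4] = hsym (2 * n) [X 4, - X 4, X 1, - X 1]"
    by (rule hsym_perm; simp add: add_mset_commute)+
  ultimately show ?thesis
    by (simp add: reduced_C_def)
qed

lemma par_homotopic_Acmn:
  "par_homotopic N (Acmn N) ((Y 1)\<^sup>2 + of_nat (2 * N + 1) * X 1 ^ (2 * N))"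
proof -
  have pp1: "par_homotopic N (X 2 + X 4) 0"
    using par_homotopic_gamma_entries(2) by (simp add: pp1_def)
  have "par_homotopic N (Acmn N) (- (- Y 1 + Y 4) * (Y 1 + - Y 4 + Y 4) - Y 1 * - Y 4
      + hsym (2 * N) [- X 1, - X 1] + 0 * wdd N [X 1, X 2, - X 3]
      - 0 * (X 1 + X 4) * (wdd N [X 1, - X 1, X 2, X 4] + wdd N [X 1, - X 1, - X 2, X 4]))"
    unfolding Acmn_def wdd_two_eq_hsym
    by (intro mult_homotopic_add mult_homotopic_diff mult_homotopic_mult mult_homotopic_uminus
        mult_homotopic_hsym list.rel_intros pp1 par_homotopic_eliminate mult_homotopic_refl)
  then show ?thesis
    by (simp add: hsym_double power_mult_distrib algebra_simps power2_eq_square)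
qed

lemma par_homotopic_saddle_square:
  "par_homotopic (Suc n) (qq2\<^sup>2 - qq1\<^sup>2 * CC (Suc n))
     (2 * Y 1 * (- Y 4) - 2 * of_nat (2 * Suc n + 1) *
        (\<Sum>i = 0..2 * Suc n. X 1 ^ i * (- X 4) ^ (2 * Suc n - i)))"
    (is "par_homotopic _ _ (2 * Y 1 * (- Y 4) - 2 * ?K * ?S)")
proof -
  define C where "C = reduced_C n (X 1) (X 4)"
  define A where "A = (Y 1)\<^sup>2 + ?K * X 1 ^ (2 * Suc n)"
  define B where "B = (Y 4 - Y 1) * (Y 1 + Y 4) + (X 4 - X 1) * (X 1 + X 4) * C"
  have "par_homotopic (Suc n) (Y 3 + Y 4) (- Y 1 + Y 4)"
    "par_homotopic (Suc n) (X 3 + X 4) (- X 1 + X 4)"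
    by (intro mult_homotopic_add par_homotopic_eliminate mult_homotopic_refl)+
  then have qq: "par_homotopic (Suc n) qq2 (Y 4 - Y 1)" "par_homotopic (Suc n) qq1 (X 4 - X 1)"
    by (simp_all add: qq1_def qq2_def)
  have reduce:
    "par_homotopic (Suc n) (qq2\<^sup>2 - qq1\<^sup>2 * CC (Suc n)) ((Y 4 - Y 1)\<^sup>2 - (X 4 - X 1)\<^sup>2 * C)"
    unfolding C_def
    by (intro mult_homotopic_diff mult_homotopic_mult mult_homotopic_power qq par_homotopic_CC)
  have "par_homotopic (Suc n) (qq2 * rr2 + qq1 * rr1 * CC (Suc n)) B"
    unfolding B_def C_def rr1_def rr2_def
    by (intro mult_homotopic_add mult_homotopic_mult qq par_homotopic_CC mult_homotopic_refl)
  then have B: "par_homotopic (Suc n) B 0"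
    using par_homotopic_gamma_entries(3) by (blast intro: mult_homotopic_trans mult_homotopic_sym)
  have A: "par_homotopic (Suc n) A 0"
    using par_homotopic_Acmn par_homotopic_Kcmn_entries(2) unfolding A_def
    by (blast intro: mult_homotopic_trans mult_homotopic_sym)
  have "X 1 + X 4 \<noteq> 0"
    using Var_neq_uminus_Var[of 1 4] by (simp add: X_def eq_neg_iff_add_eq_0)
  then have geometric: "X 4 * (X 4 - X 1) * C = ?K * (?S - X 1 ^ (2 * Suc n))"
    unfolding C_def by (rule reduced_C_geometric_sum)
  have "(Y 4 - Y 1)\<^sup>2 - (X 4 - X 1)\<^sup>2 * C - (2 * Y 1 * (- Y 4) - 2 * ?K * ?S + B + 2 * A)
      = 2 * (?K * (?S - X 1 ^ (2 * Suc n)) - X 4 * (X 4 - X 1) * C)"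
    unfolding A_def B_def by (simp add: algebra_simps power2_eq_square)
  then have "(Y 4 - Y 1)\<^sup>2 - (X 4 - X 1)\<^sup>2 * C = 2 * Y 1 * (- Y 4) - 2 * ?K * ?S + B + 2 * A"
    unfolding geometric by simp
  moreover have "par_homotopic (Suc n) (2 * Y 1 * (- Y 4) - 2 * ?K * ?S + B + 2 * A)
      (2 * Y 1 * (- Y 4) - 2 * ?K * ?S + 0 + 2 * 0)"
    by (intro mult_homotopic_add mult_homotopic_mult_left A B mult_homotopic_refl)
  ultimately show ?thesis
    using reduce by (auto intro: mult_homotopic_trans)
qed

lemma par_homotopic_target:
  "par_homotopic N
     (2 * Y 1 * Y 2 - 2 * of_nat (2 * N + 1) * (\<Sum>i = 0..2 * N. X 1 ^ i * X 2 ^ (2 * N - i)))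
     (2 * Y 1 * (- Y 4) - 2 * of_nat (2 * N + 1) *
        (\<Sum>i = 0..2 * N. X 1 ^ i * (- X 4) ^ (2 * N - i)))"
  by (intro mult_homotopic_diff mult_homotopic_mult mult_homotopic_sum mult_homotopic_power
      par_homotopic_eliminate mult_homotopic_refl)

theorem mainTheorem3:
  fixes N :: nat
  assumes "N \<ge> 1"
  shows "homotopic parityPV (Dpar N) (mmul (Hmor N) (Fmor N))
           (scal (2 * Y 1 * Y 2 - 2 * of_nat (2 * N + 1) * (\<Sum>i = 0..2 * N. X 1 ^ i * X 2 ^ (2 * N - i))))"
proof -
  obtain n where N: "N = Suc n"
    using assms by (cases N) auto
  have "mmul (Hmor N) (Fmor N) = scal (qq2\<^sup>2 - qq1\<^sup>2 * CC N)"
    unfolding Hmor_def Fmor_def idTens_mmul FpH_squared idTens_scal ..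
  moreover have "par_homotopic N (qq2\<^sup>2 - qq1\<^sup>2 * CC N)
      (2 * Y 1 * Y 2 - 2 * of_nat (2 * N + 1) * (\<Sum>i = 0..2 * N. X 1 ^ i * X 2 ^ (2 * N - i)))"
    using par_homotopic_saddle_square[of n] par_homotopic_target[of N] unfolding N
    by (blast intro: mult_homotopic_trans mult_homotopic_sym)
  ultimately show ?thesis
    unfolding mult_homotopic_def by simp
qed

end
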